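(* Let $Q$ be a Moufang loop with trivial nucleus. Then there exists a unique automorphism $\sigma$ of the multiplication group $\mathrm{Mlt}(Q)$ such that $\sigma(L_x)=R_x$ and $\sigma(R_x)=M_x^{-1}$ for every $x\in Q$, where $M_x=R_xL_x$. This automorphism satisfies $\sigma^3=\mathrm{id}_{\mathrm{Mlt}(Q)}$, and if $\varphi\in\mathrm{Inn}(Q)$ and $c\in Q$ is a companion of $\varphi$ (i.e. $c\varphi(x)\cdot\varphi(y)=c\varphi(xy)$ for all $x,y\in Q$), then $\sigma(\varphi)=R_c^{-1}\varphi$.
   Context: A loop is a magma with identity $1$ in which the left translations $L_x(y)=xy$ and right translations $R_x(y)=yx$ are bijections; it is Moufang if it satisfies $xy\cdot zx=(x\cdot yz)x$. The multiplication group $\mathrm{Mlt}(Q)$ is the permutation group generated by all $L_x,R_x$; the inner mapping group $\mathrm{Inn}(Q)$ is the stabilizer of $1$ in $\mathrm{Mlt}(Q)$. The nucleus is the set of $x$ with $x(yz)=(xy)z$, $y(xz)=(yx)z$, $y(zx)=(yz)x$ for all $y,z$. In a Moufang loop every inner mapping $\varphi$ is a pseudoautomorphism, i.e. has at least one companion $c$ with $c\varphi(x)\cdot\varphi(y)=c\varphi(xy)$ for all $x,y$. *)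

theory Defs
  imports "HOL-Algebra.Algebra"
begin

definition loop :: "'a set \<Rightarrow> ('a \<Rightarrow> 'a \<Rightarrow> 'a) \<Rightarrow> 'a \<Rightarrow> bool" where
  "loop Q m e \<longleftrightarrow> e \<in> Q \<and> (\<forall>x\<in>Q. \<forall>y\<in>Q. m x y \<in> Q)
     \<and> (\<forall>x\<in>Q. m e x = x \<and> m x e = x)
     \<and> (\<forall>x\<in>Q. bij_betw (\<lambda>y. m x y) Q Q \<and> bij_betw (\<lambda>y. m y x) Q Q)"

definition moufang_loop :: "'a set \<Rightarrow> ('a \<Rightarrow> 'a \<Rightarrow> 'a) \<Rightarrow> 'a \<Rightarrow> bool" where
  "moufang_loop Q m e \<longleftrightarrow> loop Q m e \<and>
     (\<forall>x\<in>Q. \<forall>y\<in>Q. \<forall>z\<in>Q. m (m x y) (m z x) = m (m x (m y z)) x)"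

definition nucleus :: "'a set \<Rightarrow> ('a \<Rightarrow> 'a \<Rightarrow> 'a) \<Rightarrow> 'a set" where
  "nucleus Q m = {x\<in>Q. \<forall>y\<in>Q. \<forall>z\<in>Q.
      m x (m y z) = m (m x y) z \<and> m y (m x z) = m (m y x) z \<and> m y (m z x) = m (m y z) x}"

definition Lt :: "'a set \<Rightarrow> ('a \<Rightarrow> 'a \<Rightarrow> 'a) \<Rightarrow> 'a \<Rightarrow> ('a \<Rightarrow> 'a)" where
  "Lt Q m x = (\<lambda>y\<in>Q. m x y)"

definition Rt :: "'a set \<Rightarrow> ('a \<Rightarrow> 'a \<Rightarrow> 'a) \<Rightarrow> 'a \<Rightarrow> ('a \<Rightarrow> 'a)" where
  "Rt Q m x = (\<lambda>y\<in>Q. m y x)"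

text \<open>Multiplication group: subgroup of the symmetric group on Q generated by all translations;
  the group operation is composition (g \<otimes> f = g \<circ> f).\<close>

definition Mlt :: "'a set \<Rightarrow> ('a \<Rightarrow> 'a \<Rightarrow> 'a) \<Rightarrow> ('a \<Rightarrow> 'a) monoid" where
  "Mlt Q m = (BijGroup Q)\<lparr>carrier :=
      generate (BijGroup Q) ((Lt Q m ` Q) \<union> (Rt Q m ` Q))\<rparr>"

definition Inn :: "'a set \<Rightarrow> ('a \<Rightarrow> 'a \<Rightarrow> 'a) \<Rightarrow> 'a \<Rightarrow> ('a \<Rightarrow> 'a) set" where
  "Inn Q m e = {f \<in> carrier (Mlt Q m). f e = e}"

definition companion :: "'a set \<Rightarrow> ('a \<Rightarrow> 'a \<Rightarrow> 'a) \<Rightarrow> ('a \<Rightarrow> 'a) \<Rightarrow> 'a \<Rightarrow> bool" where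
  "companion Q m \<phi> c \<longleftrightarrow> c \<in> Q \<and>
     (\<forall>x\<in>Q. \<forall>y\<in>Q. m (m c (\<phi> x)) (\<phi> y) = m c (\<phi> (m x y)))"

end

theory Submission
  imports Defs
begin

text \<open>
  An autotopism of Q is a triple (a, b, c) of permutations with a(y) b(z) = c(yz).
  In a loop with the inverse property, writing J for inversion, the rotation
  (a, b, c) \<mapsto> (b, JcJ, JaJ) maps autotopisms to autotopisms, and if moreover the
  nucleus is trivial then the first component of an autotopism determines the second one.
  The Moufang law says precisely that (L_x, R_x, M_x) is an autotopism, where M_x = R_x L_x;
  rotating it and using JM_xJ = M_x^-1 gives the autotopism (R_x, M_x^-1, JL_xJ).
  Since autotopisms are closed under composition and inverses, every g \<in> Mlt(Q) is the
  first component of an autotopism whose second component \<sigma>(g) again lies in Mlt(Q), and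
  g \<mapsto> \<sigma>(g) is a homomorphism. Rotating (g, \<sigma>(g), c) twice yields an autotopism
  (JcJ, g, \<dots>) with JcJ = \<sigma>^2(g), so \<sigma>^3 = id. Finally, if c is a companion of \<phi>
  then (L_c\<phi>, \<phi>, L_c\<phi>) is an autotopism, hence R_c \<sigma>(\<phi>) = \<sigma>(L_c\<phi>) = \<phi>.
\<close>

lemma carrier_BijGroup [simp]: "carrier (BijGroup S) = Bij S"
  by (simp add: BijGroup_def)

lemma Bij_apply_closed: "f \<in> Bij S \<Longrightarrow> x \<in> S \<Longrightarrow> f x \<in> S"
  using Bij_imp_funcset by blast

lemma Bij_eqI: "f \<in> Bij S \<Longrightarrow> g \<in> Bij S \<Longrightarrow> (\<And>x. x \<in> S \<Longrightarrow> f x = g x) \<Longrightarrow> f = g"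
  by (meson Bij_imp_extensional extensionalityI)

lemma BijGroup_mult_closed [simp, intro]:
  "f \<in> Bij S \<Longrightarrow> g \<in> Bij S \<Longrightarrow> f \<otimes>\<^bsub>BijGroup S\<^esub> g \<in> Bij S"
  by (simp add: BijGroup_def compose_Bij)

lemma BijGroup_one_closed [simp, intro]: "\<one>\<^bsub>BijGroup S\<^esub> \<in> Bij S"
  by (simp add: BijGroup_def id_Bij)

lemma BijGroup_inv_closed [simp, intro]: "f \<in> Bij S \<Longrightarrow> inv\<^bsub>BijGroup S\<^esub> f \<in> Bij S"
  using group.inv_closed[OF group_BijGroup, of f S] by simp

lemma mult_BijGroup_apply [simp]:
  "f \<in> Bij S \<Longrightarrow> g \<in> Bij S \<Longrightarrow> x \<in> S \<Longrightarrow> (f \<otimes>\<^bsub>BijGroup S\<^esub> g) x = f (g x)"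
  by (simp add: BijGroup_def compose_def)

lemma one_BijGroup_apply [simp]: "x \<in> S \<Longrightarrow> \<one>\<^bsub>BijGroup S\<^esub> x = x"
  by (simp add: BijGroup_def)

lemma inv_BijGroup_apply_cancel [simp]:
  assumes "f \<in> Bij S" "x \<in> S"
  shows "f ((inv\<^bsub>BijGroup S\<^esub> f) x) = x" and "(inv\<^bsub>BijGroup S\<^esub> f) (f x) = x"
proof -
  interpret group "BijGroup S" by (rule group_BijGroup)
  show "f ((inv\<^bsub>BijGroup S\<^esub> f) x) = x"
    using mult_BijGroup_apply[of f S "inv\<^bsub>BijGroup S\<^esub> f" x] assms by simp
  show "(inv\<^bsub>BijGroup S\<^esub> f) (f x) = x"
    using mult_BijGroup_apply[of "inv\<^bsub>BijGroup S\<^esub> f" S f x] assms by simp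
qed

section \<open>Multiplication groups of loops\<close>

lemma Lt_apply [simp]: "y \<in> Q \<Longrightarrow> Lt Q m x y = m x y"
  by (simp add: Lt_def)

lemma Rt_apply [simp]: "y \<in> Q \<Longrightarrow> Rt Q m x y = m y x"
  by (simp add: Rt_def)

lemma Lt_Bij: "loop Q m e \<Longrightarrow> x \<in> Q \<Longrightarrow> Lt Q m x \<in> Bij Q"
  by (simp add: Lt_def Bij_def loop_def)

lemma Rt_Bij: "loop Q m e \<Longrightarrow> x \<in> Q \<Longrightarrow> Rt Q m x \<in> Bij Q"
  by (simp add: Rt_def Bij_def loop_def)

lemma Mlt_generators_subset:
  assumes "loop Q m e" shows "Lt Q m ` Q \<union> Rt Q m ` Q \<subseteq> carrier (BijGroup Q)"
  using Lt_Bij[OF assms] Rt_Bij[OF assms] by auto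

lemma subgroup_Mlt:
  assumes "loop Q m e" shows "subgroup (carrier (Mlt Q m)) (BijGroup Q)"
proof -
  have "subgroup (generate (BijGroup Q) (Lt Q m ` Q \<union> Rt Q m ` Q)) (BijGroup Q)"
    by (rule group.generate_is_subgroup[OF group_BijGroup Mlt_generators_subset[OF assms]])
  then show ?thesis by (simp add: Mlt_def)
qed

lemma group_Mlt: "loop Q m e \<Longrightarrow> group (Mlt Q m)"
  using subgroup.subgroup_is_group[OF subgroup_Mlt group_BijGroup] by (simp add: Mlt_def)

lemma mult_Mlt: "f \<otimes>\<^bsub>Mlt Q m\<^esub> g = f \<otimes>\<^bsub>BijGroup Q\<^esub> g"
  by (simp add: Mlt_def)

lemma one_Mlt: "\<one>\<^bsub>Mlt Q m\<^esub> = \<one>\<^bsub>BijGroup Q\<^esub>"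
  by (simp add: Mlt_def)

lemma inv_Mlt:
  "loop Q m e \<Longrightarrow> f \<in> carrier (Mlt Q m) \<Longrightarrow> inv\<^bsub>Mlt Q m\<^esub> f = inv\<^bsub>BijGroup Q\<^esub> f"
  using group.m_inv_consistent[OF group_BijGroup subgroup_Mlt] by (simp add: Mlt_def)

lemma Lt_in_Mlt: "x \<in> Q \<Longrightarrow> Lt Q m x \<in> carrier (Mlt Q m)"
  by (simp add: Mlt_def generate.incl)

lemma Rt_in_Mlt: "x \<in> Q \<Longrightarrow> Rt Q m x \<in> carrier (Mlt Q m)"
  by (simp add: Mlt_def generate.incl)

lemma Mlt_hom_eqI:
  assumes "loop Q m e" "group H" "f \<in> hom (Mlt Q m) H" "g \<in> hom (Mlt Q m) H"
    and "\<And>x. x \<in> Q \<Longrightarrow> f (Lt Q m x) = g (Lt Q m x) \<and> f (Rt Q m x) = g (Rt Q m x)"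
    and "h \<in> carrier (Mlt Q m)"
  shows "f h = g h"
proof -
  interpret f: group_hom "Mlt Q m" H f
    using assms by (simp add: group_hom_def group_hom_axioms_def group_Mlt)
  interpret g: group_hom "Mlt Q m" H g
    using assms by (simp add: group_hom_def group_hom_axioms_def group_Mlt)
  have gens: "f k = g k" if "k \<in> Lt Q m ` Q \<union> Rt Q m ` Q" for k
    using that assms(5) by blast
  have gens_Mlt: "k \<in> carrier (Mlt Q m)" if "k \<in> Lt Q m ` Q \<union> Rt Q m ` Q" for k
    using that by (auto simp: Lt_in_Mlt Rt_in_Mlt)
  have "h \<in> generate (BijGroup Q) (Lt Q m ` Q \<union> Rt Q m ` Q)"
    using assms(6) by (simp add: Mlt_def)
  then show ?thesis
  proof (induction rule: generate.induct)
    case one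
    then show ?case using f.hom_one g.hom_one by (simp add: one_Mlt)
  next
    case (incl k)
    then show ?case using gens by blast
  next
    case (inv k)
    then have "inv\<^bsub>BijGroup Q\<^esub> k = inv\<^bsub>Mlt Q m\<^esub> k"
      using inv_Mlt[OF assms(1) gens_Mlt] by simp
    then show ?case using f.hom_inv g.hom_inv gens_Mlt[OF inv] gens[OF inv] by simp
  next
    case (eng k l)
    then have "k \<in> carrier (Mlt Q m)" "l \<in> carrier (Mlt Q m)" by (simp_all add: Mlt_def)
    then show ?case using f.hom_mult g.hom_mult eng.IH by (metis mult_Mlt)
  qed
qed

section \<open>Autotopisms\<close>

definition autotopism ::
    "'a set \<Rightarrow> ('a \<Rightarrow> 'a \<Rightarrow> 'a) \<Rightarrow> ('a \<Rightarrow> 'a) \<Rightarrow> ('a \<Rightarrow> 'a) \<Rightarrow> ('a \<Rightarrow> 'a) \<Rightarrow> bool" where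
  "autotopism Q m a b c \<longleftrightarrow> a \<in> Bij Q \<and> b \<in> Bij Q \<and> c \<in> Bij Q \<and>
     (\<forall>y\<in>Q. \<forall>z\<in>Q. m (a y) (b z) = c (m y z))"

lemma autotopismD:
  "autotopism Q m a b c \<Longrightarrow> y \<in> Q \<Longrightarrow> z \<in> Q \<Longrightarrow> m (a y) (b z) = c (m y z)"
  by (simp add: autotopism_def)

lemma autotopism_Bij:
  "autotopism Q m a b c \<Longrightarrow> a \<in> Bij Q \<and> b \<in> Bij Q \<and> c \<in> Bij Q"
  by (simp add: autotopism_def)

lemma autotopism_one:
  "m \<in> Q \<rightarrow> Q \<rightarrow> Q \<Longrightarrow> autotopism Q m \<one>\<^bsub>BijGroup Q\<^esub> \<one>\<^bsub>BijGroup Q\<^esub> \<one>\<^bsub>BijGroup Q\<^esub>"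
  by (simp add: autotopism_def Pi_iff)

lemma autotopism_mult:
  assumes "m \<in> Q \<rightarrow> Q \<rightarrow> Q" "autotopism Q m a b c" "autotopism Q m a' b' c'"
  shows "autotopism Q m (a \<otimes>\<^bsub>BijGroup Q\<^esub> a') (b \<otimes>\<^bsub>BijGroup Q\<^esub> b') (c \<otimes>\<^bsub>BijGroup Q\<^esub> c')"
  using assms by (auto simp: autotopism_def Pi_iff Bij_apply_closed)

lemma autotopism_inv:
  assumes "m \<in> Q \<rightarrow> Q \<rightarrow> Q" "autotopism Q m a b c"
  shows "autotopism Q m (inv\<^bsub>BijGroup Q\<^esub> a) (inv\<^bsub>BijGroup Q\<^esub> b) (inv\<^bsub>BijGroup Q\<^esub> c)"
proof -
  have B: "a \<in> Bij Q" "b \<in> Bij Q" "c \<in> Bij Q" using autotopism_Bij[OF assms(2)] by auto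
  have "m ((inv\<^bsub>BijGroup Q\<^esub> a) y) ((inv\<^bsub>BijGroup Q\<^esub> b) z) = (inv\<^bsub>BijGroup Q\<^esub> c) (m y z)"
    if "y \<in> Q" "z \<in> Q" for y z
  proof -
    let ?w = "m ((inv\<^bsub>BijGroup Q\<^esub> a) y) ((inv\<^bsub>BijGroup Q\<^esub> b) z)"
    have "?w \<in> Q" using assms(1) B that by (simp add: Bij_apply_closed Pi_iff)
    moreover have "c ?w = m y z"
      using autotopismD[OF assms(2), of "(inv\<^bsub>BijGroup Q\<^esub> a) y" "(inv\<^bsub>BijGroup Q\<^esub> b) z"] B that
      by (simp add: Bij_apply_closed)
    ultimately show ?thesis using B(3) by (metis inv_BijGroup_apply_cancel(2))
  qed
  then show ?thesis using B by (simp add: autotopism_def)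
qed

section \<open>Loops with the inverse property\<close>

locale ip_loop =
  fixes Q :: "'a set" and m :: "'a \<Rightarrow> 'a \<Rightarrow> 'a" and e :: 'a
  assumes loop: "loop Q m e"
    and inverse_property: "x \<in> Q \<Longrightarrow> \<exists>x'\<in>Q. \<forall>y\<in>Q. m x' (m x y) = y \<and> m (m y x) x' = y"
begin

lemma mult_closed [simp, intro]: "x \<in> Q \<Longrightarrow> y \<in> Q \<Longrightarrow> m x y \<in> Q"
  using loop by (simp add: loop_def)

lemma mult_Pi: "m \<in> Q \<rightarrow> Q \<rightarrow> Q"
  by simp

lemma unit_closed [simp, intro]: "e \<in> Q"
  using loop by (simp add: loop_def)

lemma left_unit [simp]: "x \<in> Q \<Longrightarrow> m e x = x"
  using loop by (simp add: loop_def)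

lemma right_unit [simp]: "x \<in> Q \<Longrightarrow> m x e = x"
  using loop by (simp add: loop_def)

definition loop_inv :: "'a \<Rightarrow> 'a" where
  "loop_inv x = (SOME x'. x' \<in> Q \<and> (\<forall>y\<in>Q. m x' (m x y) = y \<and> m (m y x) x' = y))"

lemma loop_inv_spec:
  assumes "x \<in> Q"
  shows "loop_inv x \<in> Q \<and> (\<forall>y\<in>Q. m (loop_inv x) (m x y) = y \<and> m (m y x) (loop_inv x) = y)"
proof -
  have "\<exists>x'. x' \<in> Q \<and> (\<forall>y\<in>Q. m x' (m x y) = y \<and> m (m y x) x' = y)"
    using inverse_property[OF assms] by blast
  then show ?thesis unfolding loop_inv_def by (rule someI_ex)
qed

lemma loop_inv_closed [simp, intro]: "x \<in> Q \<Longrightarrow> loop_inv x \<in> Q"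
  using loop_inv_spec by blast

lemma inv_mult_cancel_left [simp]: "x \<in> Q \<Longrightarrow> y \<in> Q \<Longrightarrow> m (loop_inv x) (m x y) = y"
  using loop_inv_spec by blast

lemma mult_inv_cancel_right [simp]: "x \<in> Q \<Longrightarrow> y \<in> Q \<Longrightarrow> m (m y x) (loop_inv x) = y"
  using loop_inv_spec by blast

lemma left_inverse [simp]: "x \<in> Q \<Longrightarrow> m (loop_inv x) x = e"
  using inv_mult_cancel_left[of x e] by simp

lemma right_inverse [simp]: "x \<in> Q \<Longrightarrow> m x (loop_inv x) = e"
  using mult_inv_cancel_right[of x e] by simp

lemma left_cancel: "x \<in> Q \<Longrightarrow> y \<in> Q \<Longrightarrow> z \<in> Q \<Longrightarrow> m x y = m x z \<longleftrightarrow> y = z"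
  by (metis inv_mult_cancel_left)

lemma loop_inv_loop_inv [simp]: "x \<in> Q \<Longrightarrow> loop_inv (loop_inv x) = x"
  using left_cancel[of "loop_inv x" "loop_inv (loop_inv x)" x] by simp

lemma mult_inv_cancel_left [simp]: "x \<in> Q \<Longrightarrow> y \<in> Q \<Longrightarrow> m x (m (loop_inv x) y) = y"
  using inv_mult_cancel_left[of "loop_inv x" y] by simp

lemma inv_mult_cancel_right [simp]: "x \<in> Q \<Longrightarrow> y \<in> Q \<Longrightarrow> m (m y (loop_inv x)) x = y"
  using mult_inv_cancel_right[of "loop_inv x" y] by simp

lemma loop_inv_mult: "x \<in> Q \<Longrightarrow> y \<in> Q \<Longrightarrow> loop_inv (m x y) = m (loop_inv y) (loop_inv x)"
proof -
  assume xy: "x \<in> Q" "y \<in> Q"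
  have "m (loop_inv (m x y)) x = loop_inv y"
    using inv_mult_cancel_left[of "m x y" "loop_inv y"] xy by simp
  then show ?thesis
    using mult_inv_cancel_right[of x "loop_inv (m x y)"] xy by simp
qed

definition inversion :: "'a \<Rightarrow> 'a" where
  "inversion = restrict loop_inv Q"

definition inversion_conj :: "('a \<Rightarrow> 'a) \<Rightarrow> 'a \<Rightarrow> 'a" where
  "inversion_conj f = inversion \<otimes>\<^bsub>BijGroup Q\<^esub> f \<otimes>\<^bsub>BijGroup Q\<^esub> inversion"

lemma inversion_Bij: "inversion \<in> Bij Q"
proof -
  have "bij_betw loop_inv Q Q"
    by (rule bij_betw_byWitness[where f' = loop_inv]) auto
  then show ?thesis by (simp add: inversion_def Bij_def)
qed

lemma inversion_apply [simp]: "x \<in> Q \<Longrightarrow> inversion x = loop_inv x"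
  by (simp add: inversion_def)

lemma inversion_conj_Bij [simp, intro]: "f \<in> Bij Q \<Longrightarrow> inversion_conj f \<in> Bij Q"
  by (simp add: inversion_conj_def inversion_Bij)

lemma inversion_conj_apply [simp]:
  "f \<in> Bij Q \<Longrightarrow> x \<in> Q \<Longrightarrow> inversion_conj f x = loop_inv (f (loop_inv x))"
  by (simp add: inversion_conj_def inversion_Bij Bij_apply_closed)

lemma inversion_conj_inversion_conj [simp]:
  "f \<in> Bij Q \<Longrightarrow> inversion_conj (inversion_conj f) = f"
  by (rule Bij_eqI[where S = Q]) (simp_all add: Bij_apply_closed)

lemma inversion_conj_one [simp]: "inversion_conj \<one>\<^bsub>BijGroup Q\<^esub> = \<one>\<^bsub>BijGroup Q\<^esub>"
  by (rule Bij_eqI[where S = Q]) simp_all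

lemma autotopism_rotate:
  assumes "autotopism Q m a b c"
  shows "autotopism Q m b (inversion_conj c) (inversion_conj a)"
proof -
  have B: "a \<in> Bij Q" "b \<in> Bij Q" "c \<in> Bij Q" using autotopism_Bij[OF assms] by auto
  have "m (b y) (loop_inv (c (loop_inv z))) = loop_inv (a (loop_inv (m y z)))"
    if "y \<in> Q" "z \<in> Q" for y z
  proof -
    have "m (loop_inv (m y z)) y = loop_inv z"
      using that by (simp add: loop_inv_mult)
    then have "m (a (loop_inv (m y z))) (b y) = c (loop_inv z)"
      using autotopismD[OF assms, of "loop_inv (m y z)" y] that by simp
    then have "b y = m (loop_inv (a (loop_inv (m y z)))) (c (loop_inv z))"
      using inv_mult_cancel_left[of "a (loop_inv (m y z))" "b y"] that B
      by (simp add: Bij_apply_closed)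
    then show ?thesis using that B by (simp add: Bij_apply_closed)
  qed
  then show ?thesis using B by (simp add: autotopism_def Bij_apply_closed)
qed

lemma inversion_conj_Rt_Lt:
  assumes "x \<in> Q"
  shows "inversion_conj (Rt Q m x \<otimes>\<^bsub>BijGroup Q\<^esub> Lt Q m x)
    = inv\<^bsub>BijGroup Q\<^esub> (Rt Q m x \<otimes>\<^bsub>BijGroup Q\<^esub> Lt Q m x)"
proof -
  interpret group "BijGroup Q" by (rule group_BijGroup)
  let ?M = "Rt Q m x \<otimes>\<^bsub>BijGroup Q\<^esub> Lt Q m x"
  have M: "?M \<in> Bij Q" using Lt_Bij[OF loop assms] Rt_Bij[OF loop assms] by simp
  have "inversion_conj ?M \<otimes>\<^bsub>BijGroup Q\<^esub> ?M = \<one>\<^bsub>BijGroup Q\<^esub>"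
  proof (rule Bij_eqI)
    fix y assume "y \<in> Q"
    then show "(inversion_conj ?M \<otimes>\<^bsub>BijGroup Q\<^esub> ?M) y = \<one>\<^bsub>BijGroup Q\<^esub> y"
      using M assms Lt_Bij[OF loop assms] Rt_Bij[OF loop assms] by (simp add: loop_inv_mult)
  qed (use M in simp_all)
  then show ?thesis using M by (simp add: inv_equality)
qed

lemma autotopism_left_one_imp_middle_one:
  assumes "nucleus Q m = {e}" "autotopism Q m \<one>\<^bsub>BijGroup Q\<^esub> b c"
  shows "b = \<one>\<^bsub>BijGroup Q\<^esub>"
proof -
  have B: "b \<in> Bij Q" "c \<in> Bij Q" using autotopism_Bij[OF assms(2)] by auto
  define a where "a = b e"
  have a: "a \<in> Q" using B by (simp add: a_def Bij_apply_closed)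
  have "b z = c z" if "z \<in> Q" for z
    using autotopismD[OF assms(2), of e z] that B by (simp add: Bij_apply_closed)
  moreover have "c y = m y a" if "y \<in> Q" for y
    using autotopismD[OF assms(2), of y e] that by (simp add: a_def)
  ultimately have b_Rt: "b = Rt Q m a" and c_Rt: "c = Rt Q m a"
    using B Rt_Bij[OF loop a] by (auto intro: Bij_eqI)
  \<comment> \<open>so a is right nuclear; inversion makes it left nuclear and rotation middle nuclear\<close>
  have right: "m y (m z a) = m (m y z) a" if "y \<in> Q" "z \<in> Q" for y z
    using autotopismD[OF assms(2), of y z] that a by (simp add: b_Rt c_Rt)
  have right_inv: "m y (m z (loop_inv a)) = m (m y z) (loop_inv a)" if "y \<in> Q" "z \<in> Q" for y z
  proof -
    have "m y z = m (m y (m z (loop_inv a))) a"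
      using right[of y "m z (loop_inv a)"] that a by simp
    then show ?thesis using that a by simp
  qed
  have left: "m a (m y z) = m (m a y) z" if "y \<in> Q" "z \<in> Q" for y z
  proof -
    have "loop_inv (m a (m y z)) = loop_inv (m (m a y) z)"
      using that a right_inv[of "loop_inv z" "loop_inv y"] by (simp add: loop_inv_mult)
    then show ?thesis using that a by (metis loop_inv_loop_inv mult_closed)
  qed
  have rotated: "autotopism Q m (Rt Q m a) (inversion_conj (Rt Q m a)) \<one>\<^bsub>BijGroup Q\<^esub>"
    using autotopism_rotate[OF assms(2)] by (simp add: b_Rt c_Rt)
  have "m (m y a) (m (loop_inv a) z) = m y z" if "y \<in> Q" "z \<in> Q" for y z
    using autotopismD[OF rotated, of y z] that a Rt_Bij[OF loop a]
    by (simp add: loop_inv_mult)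
  then have middle: "m y (m a z) = m (m y a) z" if "y \<in> Q" "z \<in> Q" for y z
    using that a by (metis inv_mult_cancel_left mult_closed)
  have "a \<in> nucleus Q m" using a left middle right by (simp add: nucleus_def)
  then have "a = e" using assms(1) by simp
  moreover have "Rt Q m e = \<one>\<^bsub>BijGroup Q\<^esub>"
    by (rule Bij_eqI[where S = Q]) (simp_all add: Rt_Bij[OF loop])
  ultimately show ?thesis by (simp add: b_Rt)
qed

lemma autotopism_middle_unique:
  assumes "nucleus Q m = {e}" "autotopism Q m a b c" "autotopism Q m a b' c'"
  shows "b' = b"
proof -
  interpret group "BijGroup Q" by (rule group_BijGroup)
  have B: "a \<in> Bij Q" "b \<in> Bij Q" "b' \<in> Bij Q" using assms autotopism_Bij by blast+
  have "autotopism Q m (inv\<^bsub>BijGroup Q\<^esub> a \<otimes>\<^bsub>BijGroup Q\<^esub> a) (inv\<^bsub>BijGroup Q\<^esub> b \<otimes>\<^bsub>BijGroup Q\<^esub> b')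
      (inv\<^bsub>BijGroup Q\<^esub> c \<otimes>\<^bsub>BijGroup Q\<^esub> c')"
    by (rule autotopism_mult[OF mult_Pi autotopism_inv[OF mult_Pi assms(2)] assms(3)])
  then have "inv\<^bsub>BijGroup Q\<^esub> b \<otimes>\<^bsub>BijGroup Q\<^esub> b' = \<one>\<^bsub>BijGroup Q\<^esub>"
    using autotopism_left_one_imp_middle_one[OF assms(1)] B by simp
  then show ?thesis using B inv_solve_left'[of "\<one>\<^bsub>BijGroup Q\<^esub>" b b'] by simp
qed

end

section \<open>Moufang loops\<close>

lemma moufang_loop_inverse_property:
  assumes "moufang_loop Q m e" "x \<in> Q"
  shows "\<exists>x'\<in>Q. \<forall>y\<in>Q. m x' (m x y) = y \<and> m (m y x) x' = y"
proof -
  have loop: "loop Q m e"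
    and moufang: "\<And>x y z. x \<in> Q \<Longrightarrow> y \<in> Q \<Longrightarrow> z \<in> Q \<Longrightarrow> m (m x y) (m z x) = m (m x (m y z)) x"
    using assms(1) by (simp_all add: moufang_loop_def)
  have closed [simp]: "\<And>y z. y \<in> Q \<Longrightarrow> z \<in> Q \<Longrightarrow> m y z \<in> Q" and e: "e \<in> Q"
    and units [simp]: "\<And>y. y \<in> Q \<Longrightarrow> m e y = y" "\<And>y. y \<in> Q \<Longrightarrow> m y e = y"
    using loop by (simp_all add: loop_def)
  have bij: "bij_betw (\<lambda>y. m x y) Q Q" "bij_betw (\<lambda>y. m y x) Q Q"
    using loop assms(2) by (simp_all add: loop_def)
  have cancel_left: "y = z" if "y \<in> Q" "z \<in> Q" "m x y = m x z" for y z
    using inj_onD[OF bij_betw_imp_inj_on[OF bij(1)]] that by blast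
  have cancel_right: "y = z" if "y \<in> Q" "z \<in> Q" "m y x = m z x" for y z
    using inj_onD[OF bij_betw_imp_inj_on[OF bij(2)]] that by blast
  have "e \<in> (\<lambda>y. m x y) ` Q" using bij(1) e by (simp add: bij_betw_def)
  then obtain x' where x': "x' \<in> Q" "m x x' = e" by blast
  have flexible: "m x (m z x) = m (m x z) x" if "z \<in> Q" for z
    using moufang[of x e z] assms(2) e that by simp
  have mult_inv_cancel_left: "m x (m x' z) = z" if "z \<in> Q" for z
  proof -
    have "m z x = m (m x (m x' z)) x" using moufang[of x x' z] assms(2) x' that by simp
    then show ?thesis using cancel_right[of "m x (m x' z)" z] assms(2) x' that by simp
  qed
  have inv_mult_cancel_left: "m x' (m x z) = z" if "z \<in> Q" for z
    using mult_inv_cancel_left[of "m x z"] cancel_left[of "m x' (m x z)" z] assms(2) x' that by simp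
  have inv_mult_cancel_right: "m (m y x') x = y" if "y \<in> Q" for y
  proof -
    have "m (m x y) (m x' x) = m x (m (m y x') x)"
      using moufang[of x y x'] flexible[of "m y x'"] assms(2) x' that by simp
    moreover have "m x' x = e" using inv_mult_cancel_left[of e] assms(2) e by simp
    ultimately show ?thesis using cancel_left[of "m (m y x') x" y] assms(2) x' that by simp
  qed
  have "m (m y x) x' = y" if "y \<in> Q" for y
    using inv_mult_cancel_right[of "m y x"] cancel_right[of "m (m y x) x'" y] assms(2) x' that by simp
  then show ?thesis using x' inv_mult_cancel_left by blast
qed

locale moufang =
  fixes Q :: "'a set" and m :: "'a \<Rightarrow> 'a \<Rightarrow> 'a" and e :: 'a
  assumes moufang_loop: "moufang_loop Q m e"

sublocale moufang \<subseteq> ip_loop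
  using moufang_loop moufang_loop_inverse_property
  by unfold_locales (simp_all add: moufang_loop_def)

context moufang
begin

lemma autotopism_Lt_Rt:
  "x \<in> Q \<Longrightarrow> autotopism Q m (Lt Q m x) (Rt Q m x) (Rt Q m x \<otimes>\<^bsub>BijGroup Q\<^esub> Lt Q m x)"
  using moufang_loop Lt_Bij[OF loop] Rt_Bij[OF loop]
  by (simp add: autotopism_def moufang_loop_def)

lemma autotopism_Rt:
  "x \<in> Q \<Longrightarrow> autotopism Q m (Rt Q m x) (inv\<^bsub>BijGroup Q\<^esub> (Rt Q m x \<otimes>\<^bsub>BijGroup Q\<^esub> Lt Q m x))
     (inversion_conj (Lt Q m x))"
  using autotopism_rotate[OF autotopism_Lt_Rt] by (simp add: inversion_conj_Rt_Lt)

lemma generator_autotopism_exists: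
  assumes "g \<in> Lt Q m ` Q \<union> Rt Q m ` Q"
  shows "\<exists>h \<in> carrier (Mlt Q m). \<exists>c. autotopism Q m g h c"
  using assms
proof
  assume "g \<in> Lt Q m ` Q"
  then obtain x where x: "x \<in> Q" "g = Lt Q m x" by blast
  show ?thesis using autotopism_Lt_Rt[OF x(1)] Rt_in_Mlt[OF x(1)] x(2) by blast
next
  assume "g \<in> Rt Q m ` Q"
  then obtain x where x: "x \<in> Q" "g = Rt Q m x" by blast
  interpret Mlt: subgroup "carrier (Mlt Q m)" "BijGroup Q" by (rule subgroup_Mlt[OF loop])
  have "inv\<^bsub>BijGroup Q\<^esub> (Rt Q m x \<otimes>\<^bsub>BijGroup Q\<^esub> Lt Q m x) \<in> carrier (Mlt Q m)"
    using Rt_in_Mlt[OF x(1)] Lt_in_Mlt[OF x(1)] by simp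
  then show ?thesis using autotopism_Rt[OF x(1)] x(2) by blast
qed

lemma Mlt_autotopism_exists:
  assumes "g \<in> carrier (Mlt Q m)"
  shows "\<exists>h \<in> carrier (Mlt Q m). \<exists>c. autotopism Q m g h c"
proof -
  interpret Mlt: subgroup "carrier (Mlt Q m)" "BijGroup Q" by (rule subgroup_Mlt[OF loop])
  have "g \<in> generate (BijGroup Q) (Lt Q m ` Q \<union> Rt Q m ` Q)"
    using assms by (simp add: Mlt_def)
  then show ?thesis
  proof (induction rule: generate.induct)
    case one
    then show ?case using autotopism_one[OF mult_Pi] Mlt.one_closed by blast
  next
    case (incl g)
    then show ?case by (rule generator_autotopism_exists)
  next
    case (inv g)
    then obtain h c where "h \<in> carrier (Mlt Q m)" "autotopism Q m g h c"
      using generator_autotopism_exists by blast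
    then show ?case using autotopism_inv[OF mult_Pi] Mlt.m_inv_closed by blast
  next
    case (eng g g')
    then obtain h c h' c' where
      "h \<in> carrier (Mlt Q m)" "autotopism Q m g h c" "h' \<in> carrier (Mlt Q m)" "autotopism Q m g' h' c'"
      by blast
    then show ?case using autotopism_mult[OF mult_Pi] Mlt.m_closed by blast
  qed
qed

end

section \<open>The triality automorphism\<close>

locale moufang_trivial_nucleus = moufang +
  assumes nucleus_trivial: "nucleus Q m = {e}"
begin

definition triality :: "('a \<Rightarrow> 'a) \<Rightarrow> 'a \<Rightarrow> 'a" where
  "triality = (\<lambda>g \<in> carrier (Mlt Q m). THE h. \<exists>c. autotopism Q m g h c)"

lemma triality_eq:
  assumes "g \<in> carrier (Mlt Q m)" "autotopism Q m g h c"
  shows "triality g = h"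
proof -
  have "(THE h. \<exists>c. autotopism Q m g h c) = h"
    using assms(2) autotopism_middle_unique[OF nucleus_trivial] by blast
  then show ?thesis using assms(1) by (simp add: triality_def)
qed

lemma triality_closed: "g \<in> carrier (Mlt Q m) \<Longrightarrow> triality g \<in> carrier (Mlt Q m)"
  using Mlt_autotopism_exists triality_eq by blast

lemma autotopism_triality: "g \<in> carrier (Mlt Q m) \<Longrightarrow> \<exists>c. autotopism Q m g (triality g) c"
  using Mlt_autotopism_exists triality_eq by blast

lemma triality_Lt: "x \<in> Q \<Longrightarrow> triality (Lt Q m x) = Rt Q m x"
  using triality_eq[OF Lt_in_Mlt autotopism_Lt_Rt] .

lemma triality_Rt:
  assumes "x \<in> Q"
  shows "triality (Rt Q m x) = inv\<^bsub>Mlt Q m\<^esub> (Rt Q m x \<otimes>\<^bsub>Mlt Q m\<^esub> Lt Q m x)"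
proof -
  interpret Mlt: group "Mlt Q m" by (rule group_Mlt[OF loop])
  have "Rt Q m x \<otimes>\<^bsub>Mlt Q m\<^esub> Lt Q m x \<in> carrier (Mlt Q m)"
    using Rt_in_Mlt[OF assms] Lt_in_Mlt[OF assms] by (rule Mlt.m_closed)
  then show ?thesis
    using triality_eq[OF Rt_in_Mlt autotopism_Rt] assms by (simp add: inv_Mlt[OF loop] mult_Mlt)
qed

lemma triality_mult:
  assumes "g \<in> carrier (Mlt Q m)" "g' \<in> carrier (Mlt Q m)"
  shows "triality (g \<otimes>\<^bsub>Mlt Q m\<^esub> g') = triality g \<otimes>\<^bsub>Mlt Q m\<^esub> triality g'"
proof -
  obtain c c' where "autotopism Q m g (triality g) c" "autotopism Q m g' (triality g') c'"
    using autotopism_triality assms by blast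
  then have "autotopism Q m (g \<otimes>\<^bsub>Mlt Q m\<^esub> g') (triality g \<otimes>\<^bsub>Mlt Q m\<^esub> triality g')
      (c \<otimes>\<^bsub>BijGroup Q\<^esub> c')"
    using autotopism_mult[OF mult_Pi] by (simp add: mult_Mlt)
  moreover have "g \<otimes>\<^bsub>Mlt Q m\<^esub> g' \<in> carrier (Mlt Q m)"
    using assms by (rule monoid.m_closed[OF group.is_monoid[OF group_Mlt[OF loop]]])
  ultimately show ?thesis using triality_eq by blast
qed

lemma triality_triality_triality:
  assumes "g \<in> carrier (Mlt Q m)"
  shows "triality (triality (triality g)) = g"
proof -
  obtain c where c: "autotopism Q m g (triality g) c"
    using autotopism_triality assms by blast
  have g: "g \<in> Bij Q"
    using assms subgroup.subset[OF subgroup_Mlt[OF loop]] by auto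
  have "autotopism Q m (triality g) (inversion_conj c) (inversion_conj g)"
    using autotopism_rotate[OF c] .
  then have twice: "triality (triality g) = inversion_conj c"
    using triality_eq triality_closed assms by blast
  have "autotopism Q m (inversion_conj c) g (inversion_conj (triality g))"
    using autotopism_rotate[OF autotopism_rotate[OF c]] g by simp
  then show ?thesis
    using triality_eq triality_closed assms twice by metis
qed

lemma triality_auto: "triality \<in> auto (Mlt Q m)"
proof -
  have "triality \<in> hom (Mlt Q m) (Mlt Q m)"
    by (rule homI) (simp_all add: triality_closed triality_mult)
  moreover have "bij_betw triality (carrier (Mlt Q m)) (carrier (Mlt Q m))"
    by (rule bij_betw_byWitness[where f' = "\<lambda>g. triality (triality g)"])
      (auto simp: triality_triality_triality triality_closed)
  ultimately show ?thesis by (simp add: auto_def Bij_def triality_def)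
qed

lemma triality_unique:
  assumes "\<tau> \<in> auto (Mlt Q m)"
    and "\<And>x. x \<in> Q \<Longrightarrow> \<tau> (Lt Q m x) = Rt Q m x \<and>
           \<tau> (Rt Q m x) = inv\<^bsub>Mlt Q m\<^esub> (Rt Q m x \<otimes>\<^bsub>Mlt Q m\<^esub> Lt Q m x)"
  shows "\<tau> = triality"
proof (rule extensionalityI[where A = "carrier (Mlt Q m)"])
  show "\<tau> \<in> extensional (carrier (Mlt Q m))" "triality \<in> extensional (carrier (Mlt Q m))"
    using assms(1) triality_auto by (simp_all add: auto_def Bij_def)
  fix g assume "g \<in> carrier (Mlt Q m)"
  then show "\<tau> g = triality g"
    using Mlt_hom_eqI[OF loop group_Mlt[OF loop]] assms triality_auto triality_Lt triality_Rt
    by (simp add: auto_def)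
qed

lemma triality_companion:
  assumes "\<phi> \<in> carrier (Mlt Q m)" "companion Q m \<phi> c"
  shows "triality \<phi> = inv\<^bsub>Mlt Q m\<^esub> (Rt Q m c) \<otimes>\<^bsub>Mlt Q m\<^esub> \<phi>"
proof -
  interpret Mlt: group "Mlt Q m" by (rule group_Mlt[OF loop])
  have c: "c \<in> Q"
    and pseudo: "\<And>x y. x \<in> Q \<Longrightarrow> y \<in> Q \<Longrightarrow> m (m c (\<phi> x)) (\<phi> y) = m c (\<phi> (m x y))"
    using assms(2) by (simp_all add: companion_def)
  have Lc\<phi>: "Lt Q m c \<otimes>\<^bsub>Mlt Q m\<^esub> \<phi> \<in> carrier (Mlt Q m)"
    using Lt_in_Mlt[OF c] assms(1) by (rule Mlt.m_closed)
  have \<phi>: "\<phi> \<in> Bij Q"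
    using assms(1) subgroup.subset[OF subgroup_Mlt[OF loop]] by auto
  have "autotopism Q m (Lt Q m c \<otimes>\<^bsub>Mlt Q m\<^esub> \<phi>) \<phi> (Lt Q m c \<otimes>\<^bsub>Mlt Q m\<^esub> \<phi>)"
    using \<phi> Lt_Bij[OF loop c] pseudo by (simp add: autotopism_def Bij_apply_closed mult_Mlt)
  then have "\<phi> = triality (Lt Q m c \<otimes>\<^bsub>Mlt Q m\<^esub> \<phi>)"
    using triality_eq[OF Lc\<phi>] by simp
  also have "\<dots> = Rt Q m c \<otimes>\<^bsub>Mlt Q m\<^esub> triality \<phi>"
    using triality_mult[OF Lt_in_Mlt[OF c] assms(1)] triality_Lt[OF c] by simp
  finally show ?thesis
    using Mlt.inv_solve_left Rt_in_Mlt[OF c] triality_closed[OF assms(1)] assms(1) by blast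
qed

end

theorem lemma6p3:
  assumes "moufang_loop Q m e"
    and "nucleus Q m = {e}"
  shows "\<exists>\<sigma>. (\<sigma> \<in> auto (Mlt Q m) \<and>
            (\<forall>x\<in>Q. \<sigma> (Lt Q m x) = Rt Q m x \<and>
                    \<sigma> (Rt Q m x) = inv\<^bsub>Mlt Q m\<^esub> (Rt Q m x \<otimes>\<^bsub>Mlt Q m\<^esub> Lt Q m x)))
          \<and> (\<forall>\<tau>. \<tau> \<in> auto (Mlt Q m) \<and>
                 (\<forall>x\<in>Q. \<tau> (Lt Q m x) = Rt Q m x \<and>
                    \<tau> (Rt Q m x) = inv\<^bsub>Mlt Q m\<^esub> (Rt Q m x \<otimes>\<^bsub>Mlt Q m\<^esub> Lt Q m x))
               \<longrightarrow> \<tau> = \<sigma>)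
          \<and> (\<forall>g\<in>carrier (Mlt Q m). \<sigma> (\<sigma> (\<sigma> g)) = g)
          \<and> (\<forall>\<phi>\<in>Inn Q m e. \<forall>c. companion Q m \<phi> c \<longrightarrow>
                 \<sigma> \<phi> = inv\<^bsub>Mlt Q m\<^esub> (Rt Q m c) \<otimes>\<^bsub>Mlt Q m\<^esub> \<phi>)"
proof -
  interpret moufang_trivial_nucleus Q m e
    using assms by unfold_locales
  show ?thesis
  proof (intro exI[of _ triality] conjI ballI allI impI)
    show "triality \<in> auto (Mlt Q m)" by (rule triality_auto)
  next
    fix x assume "x \<in> Q"
    then show "triality (Lt Q m x) = Rt Q m x"
      and "triality (Rt Q m x) = inv\<^bsub>Mlt Q m\<^esub> (Rt Q m x \<otimes>\<^bsub>Mlt Q m\<^esub> Lt Q m x)"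
      by (simp_all add: triality_Lt triality_Rt)
  next
    fix \<tau> assume "\<tau> \<in> auto (Mlt Q m) \<and> (\<forall>x\<in>Q. \<tau> (Lt Q m x) = Rt Q m x \<and>
      \<tau> (Rt Q m x) = inv\<^bsub>Mlt Q m\<^esub> (Rt Q m x \<otimes>\<^bsub>Mlt Q m\<^esub> Lt Q m x))"
    then show "\<tau> = triality" using triality_unique by blast
  next
    fix g assume "g \<in> carrier (Mlt Q m)"
    then show "triality (triality (triality g)) = g" by (rule triality_triality_triality)
  next
    fix \<phi> c assume "\<phi> \<in> Inn Q m e" "companion Q m \<phi> c"
    then show "triality \<phi> = inv\<^bsub>Mlt Q m\<^esub> (Rt Q m c) \<otimes>\<^bsub>Mlt Q m\<^esub> \<phi>"
      by (simp add: Inn_def triality_companion)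
  qed
qed

end
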